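(* Let $\theta\in\mathbb{R}^n$ be a vector with each entry $\theta_i\in\{0,1\}$, $i=1,\dots,n$. Let $\Theta=\mathrm{Diag}(\theta)$ and $\Sigma=I_n-\Theta$. Then for any matrix $H\in\mathbb{R}^{m\times n}$, \[ I_n-[\Theta\ H^T]\left(\begin{bmatrix}\Theta\\ H\end{bmatrix}[\Theta\ H^T]\right)^{\dagger}\begin{bmatrix}\Theta\\ H\end{bmatrix}=\Sigma-\Sigma H^T(H\Sigma H^T)^{\dagger}H\Sigma . \]
   Context: $\mathrm{Diag}(y)$ is the diagonal matrix with diagonal $y$; $I_n$ is the $n\times n$ identity; $N^\dagger$ is the Moore–Penrose pseudo-inverse of $N$. *)

theory Defs
  imports "HOL-Analysis.Analysis"
begin

definition pinv :: "real^'n^'m \<Rightarrow> real^'m^'n" where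
  "pinv A = (THE X. A ** X ** A = A \<and> X ** A ** X = X \<and>
                    transpose (A ** X) = A ** X \<and> transpose (X ** A) = X ** A)"

definition Diag :: "real^'n \<Rightarrow> real^'n^'n" where
  "Diag y = (\<chi> i j. if i = j then y $ i else 0)"

definition vstack :: "real^'n^'p \<Rightarrow> real^'n^'q \<Rightarrow> real^'n^('p + 'q)" where
  "vstack A B = (\<chi> i. case i of Inl j \<Rightarrow> A $ j | Inr k \<Rightarrow> B $ k)"

definition hstack :: "real^'p^'m \<Rightarrow> real^'q^'m \<Rightarrow> real^('p + 'q)^'m" where
  "hstack A B = (\<chi> i j. case j of Inl k \<Rightarrow> A $ i $ k | Inr l \<Rightarrow> B $ i $ l)"

end

theory Submission
  imports Defs
begin

text \<open>Write \<open>A = [\<Theta>; H]\<close>. The left-hand side is \<open>I - P\<close> with \<open>P = A\<^sup>T (A A\<^sup>T)\<^sup>\<dagger> A\<close>,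
  and \<open>P\<close> is the only matrix in the row space of \<open>A\<close> (i.e. of the form \<open>A\<^sup>T Z\<close>) with \<open>A P = A\<close>.
  Since \<open>\<Theta>\<close> and \<open>\<Sigma>\<close> are complementary orthogonal projectors, the matrix
  \<open>\<Theta> + \<Sigma> H\<^sup>T (H \<Sigma> H\<^sup>T)\<^sup>\<dagger> H \<Sigma>\<close> has both properties, so it equals \<open>P\<close>, and
  subtracting it from \<open>I = \<Theta> + \<Sigma>\<close> gives the right-hand side.\<close>

lemma matrix_diff_ldistrib: "(A::'a::ring_1^'n^'m) ** (B - C) = A ** B - A ** C"
  by (simp add: matrix_matrix_mult_def vec_eq_iff sum_subtractf right_diff_distrib)

lemma matrix_diff_rdistrib: "((B::'a::ring_1^'n^'m) - C) ** A = B ** A - C ** A"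
  by (simp add: matrix_matrix_mult_def vec_eq_iff sum_subtractf left_diff_distrib)

lemma transpose_diff: "transpose ((A::'a::ring_1^'n^'m) - B) = transpose A - transpose B"
  by (simp add: transpose_def vec_eq_iff)

lemma transpose_mult_self_eq_0:
  fixes M :: "real^'n^'m"
  assumes "transpose M ** M = 0"
  shows "M = 0"
proof -
  have "M $ i $ j = 0" for i j
  proof -
    have "(\<Sum>k\<in>UNIV. M $ k $ j * M $ k $ j) = (transpose M ** M) $ j $ j"
      by (simp add: matrix_matrix_mult_def transpose_def)
    then have "(\<Sum>k\<in>UNIV. M $ k $ j * M $ k $ j) = 0"
      using assms by simp
    then show ?thesis
      by (subst (asm) sum_nonneg_eq_0_iff) auto
  qed
  then show ?thesis by (simp add: vec_eq_iff)
qed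

lemma mult_transpose_self_eq_0:
  fixes M :: "real^'n^'m"
  assumes "M ** transpose M = 0"
  shows "M = 0"
proof -
  have "transpose M = 0"
    using transpose_mult_self_eq_0[of "transpose M"] assms by simp
  then show ?thesis by (auto simp: transpose_def vec_eq_iff)
qed

definition penrose_conditions :: "real^'n^'m \<Rightarrow> real^'m^'n \<Rightarrow> bool" where
  "penrose_conditions A X \<longleftrightarrow> A ** X ** A = A \<and> X ** A ** X = X \<and>
     transpose (A ** X) = A ** X \<and> transpose (X ** A) = X ** A"

lemma penrose_conditions_unique:
  assumes "penrose_conditions A X" "penrose_conditions A Y"
  shows "X = Y"
proof -
  from assms have x1: "A ** X ** A = A" and x2: "X ** A ** X = X"
    and x3: "transpose (A ** X) = A ** X" and x4: "transpose (X ** A) = X ** A"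
    and y1: "A ** Y ** A = A" and y2: "Y ** A ** Y = Y"
    and y3: "transpose (A ** Y) = A ** Y" and y4: "transpose (Y ** A) = Y ** A"
    by (simp_all add: penrose_conditions_def)
  have "X = X ** transpose (A ** X)" using x2 x3 by (simp add: matrix_mul_assoc)
  also have "\<dots> = X ** transpose X ** transpose (A ** Y ** A)"
    using y1 by (simp add: matrix_transpose_mul matrix_mul_assoc)
  also have "\<dots> = X ** transpose (A ** X) ** transpose (A ** Y)"
    by (simp add: matrix_transpose_mul matrix_mul_assoc)
  also have "\<dots> = X ** (A ** X ** A) ** Y" using x3 y3 by (simp add: matrix_mul_assoc)
  finally have X: "X = X ** A ** Y" using x1 by simp
  have "Y = transpose (Y ** A) ** Y" using y2 y4 by (simp add: matrix_mul_assoc)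
  also have "\<dots> = transpose (A ** X ** A) ** transpose Y ** Y"
    using x1 by (simp add: matrix_transpose_mul matrix_mul_assoc)
  also have "\<dots> = transpose (X ** A) ** transpose (Y ** A) ** Y"
    by (simp add: matrix_transpose_mul matrix_mul_assoc)
  also have "\<dots> = X ** A ** (Y ** A ** Y)" using x4 y4 by (simp add: matrix_mul_assoc)
  finally show ?thesis using X y2 by simp
qed

text \<open>The component \<open>z\<close> of \<open>B\<^sup>T y\<close> orthogonal to the range of \<open>B\<^sup>T B\<close> satisfies
  \<open>B z = 0\<close>, so it is also orthogonal to \<open>B\<^sup>T y\<close>, hence \<open>z = 0\<close>.\<close>

lemma normal_equation_solvable:
  fixes B :: "real^'n^'m"
  shows "\<exists>c. (transpose B ** B) *v c = transpose B *v y"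
proof -
  let ?S = "range (\<lambda>c. (transpose B ** B) *v c)"
  have "subspace ?S"
    by (metis linear_subspace_image subspace_UNIV matrix_vector_mul_linear)
  obtain s z where s: "s \<in> span ?S" and z: "\<And>w. w \<in> span ?S \<Longrightarrow> orthogonal z w"
    and decomp: "transpose B *v y = s + z"
    using orthogonal_subspace_decomp_exists by blast
  have "s \<in> ?S" using s \<open>subspace ?S\<close> span_eq_iff by blast
  have "inner (B *v z) (B *v z) = inner z ((transpose B ** B) *v z)"
    by (metis dot_lmul_matrix inner_commute matrix_vector_mul_assoc transpose_matrix_vector)
  also have "\<dots> = 0" using z by (simp add: span_base orthogonal_def)
  finally have Bz: "B *v z = 0" by simp
  have "inner z z = inner z (transpose B *v y) - inner z s"
    using decomp by (simp add: inner_add_right)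
  also have "\<dots> = 0"
    using z[OF s] Bz by (metis orthogonal_def dot_lmul_matrix inner_commute inner_zero_right
        transpose_matrix_vector diff_self)
  finally have "z = 0" by simp
  then show ?thesis using \<open>s \<in> ?S\<close> decomp by auto
qed

lemma normal_equation_matrix_solvable:
  fixes B :: "real^'n^'m"
  shows "\<exists>C. (transpose B ** B) ** C = transpose B"
proof -
  have "\<forall>j. \<exists>c. (transpose B ** B) *v c = transpose B *v axis j 1"
    using normal_equation_solvable by blast
  then obtain c where c: "\<And>j. (transpose B ** B) *v c j = transpose B *v axis j 1"
    by metis
  have "((transpose B ** B) ** (\<chi> i j. c j $ i)) $ i $ j = transpose B $ i $ j" for i j
    using arg_cong[OF c[of j], of "\<lambda>v. v $ i"]
    by (simp add: matrix_matrix_mult_def matrix_vector_mult_def axis_def if_distrib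
        cong: if_cong)
  then show ?thesis by (auto simp: vec_eq_iff)
qed

lemma normal_equation_projector:
  fixes A :: "real^'n^'m"
  assumes C: "(transpose A ** A) ** C = transpose A"
  shows "transpose (A ** C) = A ** C" "A ** C ** A = A"
proof -
  have "transpose (A ** C) = transpose C ** (transpose A ** A ** C)"
    using C by (simp add: matrix_transpose_mul)
  also have "\<dots> = transpose (A ** C) ** (A ** C)"
    by (simp add: matrix_transpose_mul matrix_mul_assoc)
  finally have "transpose (A ** C) = transpose (A ** C) ** (A ** C)" .
  then show sym: "transpose (A ** C) = A ** C"
    by (metis matrix_transpose_mul transpose_transpose)
  have "A ** C ** A = transpose (transpose A ** A ** C)"
    using sym by (simp add: matrix_transpose_mul matrix_mul_assoc)
  then show "A ** C ** A = A" using C by simp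
qed

text \<open>With \<open>A\<^sup>TA C = A\<^sup>T\<close> and \<open>E A A\<^sup>T = A\<^sup>T\<close>, the matrix \<open>E A C\<close> is the pseudo-inverse.\<close>

lemma penrose_conditions_exist: "\<exists>X. penrose_conditions (A::real^'n^'m) X"
proof -
  obtain C where C: "(transpose A ** A) ** C = transpose A"
    using normal_equation_matrix_solvable by blast
  obtain F where F: "(transpose (transpose A) ** transpose A) ** F = transpose (transpose A)"
    using normal_equation_matrix_solvable by blast
  define E where "E = transpose F"
  have AC: "transpose (A ** C) = A ** C" "A ** C ** A = A"
    using normal_equation_projector[OF C] by simp_all
  have F_proj: "transpose (transpose A ** F) = transpose A ** F"
      "transpose A ** F ** transpose A = transpose A"
    using normal_equation_projector[OF F] by simp_all
  have EA_eq: "E ** A = transpose A ** F"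
    using F_proj(1) by (simp add: E_def matrix_transpose_mul)
  have AEA: "A ** E ** A = A"
    using arg_cong[OF F_proj(2), of transpose] by (simp add: E_def matrix_transpose_mul matrix_mul_assoc)
  have EA_sym: "transpose (E ** A) = E ** A"
    using EA_eq F_proj(1) by simp
  have AX: "A ** (E ** A ** C) = A ** C"
    using AEA by (simp add: matrix_mul_assoc)
  have XA: "(E ** A ** C) ** A = E ** A"
    using AC(2) by (metis matrix_mul_assoc)
  have "(E ** A ** C) ** A ** (E ** A ** C) = E ** (A ** E ** A) ** C"
    unfolding XA by (simp add: matrix_mul_assoc)
  then have "penrose_conditions A (E ** A ** C)"
    using AX XA AC EA_sym AEA by (simp add: penrose_conditions_def)
  then show ?thesis ..
qed

lemma penrose_conditions_pinv: "penrose_conditions A (pinv A)"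
proof -
  obtain X where X: "penrose_conditions A X" using penrose_conditions_exist by blast
  show ?thesis
    unfolding pinv_def penrose_conditions_def[symmetric]
    using X by (rule theI) (use X penrose_conditions_unique in blast)
qed

lemma gram_generalized_inverse_cancel:
  fixes A :: "real^'n^'k"
  assumes "(A ** transpose A) ** X ** (A ** transpose A) = A ** transpose A"
  shows "(A ** transpose A) ** X ** A = A"
proof -
  define E where "E = (A ** transpose A ** X - mat 1) ** A"
  have "E ** transpose E
      = ((A ** transpose A ** X - mat 1) ** (A ** transpose A)) ** transpose (A ** transpose A ** X - mat 1)"
    unfolding E_def by (simp add: matrix_transpose_mul matrix_mul_assoc)
  also have "\<dots> = 0"
    using assms by (simp add: matrix_diff_rdistrib)
  finally have "E = 0" by (rule mult_transpose_self_eq_0)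
  then show ?thesis unfolding E_def by (simp add: matrix_diff_rdistrib)
qed

lemma right_identity_in_row_space_unique:
  fixes A :: "real^'n^'k"
  assumes "A ** P = A" "P = transpose A ** Z" "A ** P' = A" "P' = transpose A ** Z'"
  shows "P = P'"
proof -
  have "P - P' = transpose A ** (Z - Z')"
    using assms(2,4) by (simp add: matrix_diff_ldistrib)
  then have "transpose (P - P') = transpose (Z - Z') ** A"
    by (simp add: matrix_transpose_mul)
  then have "transpose (P - P') ** (P - P') = transpose (Z - Z') ** (A ** (P - P'))"
    by (simp add: matrix_mul_assoc)
  also have "\<dots> = 0" using assms(1,3) by (simp add: matrix_diff_ldistrib)
  finally show ?thesis using transpose_mult_self_eq_0 by fastforce
qed

lemma row_space_projector_eq:
  fixes A :: "real^'n^'k"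
  assumes "A ** P = A" "P = transpose A ** Z"
  shows "transpose A ** pinv (A ** transpose A) ** A = P"
proof (rule right_identity_in_row_space_unique[OF _ _ assms])
  have "(A ** transpose A) ** pinv (A ** transpose A) ** (A ** transpose A) = A ** transpose A"
    using penrose_conditions_pinv penrose_conditions_def by blast
  then show "A ** (transpose A ** pinv (A ** transpose A) ** A) = A"
    using gram_generalized_inverse_cancel by (simp add: matrix_mul_assoc)
  show "transpose A ** pinv (A ** transpose A) ** A = transpose A ** (pinv (A ** transpose A) ** A)"
    by (simp add: matrix_mul_assoc)
qed

lemma hstack_transpose: "hstack (transpose P) (transpose Q) = transpose (vstack P Q)"
  by (simp add: hstack_def vstack_def transpose_def vec_eq_iff split: sum.split)

lemma vstack_mult: "vstack P Q ** M = vstack (P ** M) (Q ** M)"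
  by (simp add: vstack_def matrix_matrix_mult_def vec_eq_iff split: sum.split)

lemma hstack_vstack_mult: "hstack X Y ** vstack U V = X ** U + Y ** V"
  by (simp add: vstack_def hstack_def matrix_matrix_mult_def vec_eq_iff
      sum.Plus[of UNIV UNIV, unfolded UNIV_Plus_UNIV])

lemma Diag_mult: "Diag x ** Diag y = Diag (x * y)"
proof -
  have "(\<Sum>k\<in>UNIV. (if i = k then x $ i else 0) * (if k = j then y $ k else 0))
      = (\<Sum>k\<in>UNIV. if k = i then (if i = j then x $ i * y $ i else 0) else 0)" for i j
    by (rule sum.cong) auto
  then show ?thesis
    by (simp add: Diag_def matrix_matrix_mult_def vec_eq_iff)
qed

lemma transpose_Diag: "transpose (Diag x) = Diag x"
  by (simp add: Diag_def transpose_def vec_eq_iff)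

lemma projected_gram_pinv_cancel:
  fixes H :: "real^'n^'m"
  assumes "transpose S = S" "S ** S = S"
  shows "H ** S ** transpose H ** pinv (H ** S ** transpose H) ** H ** S = H ** S"
proof -
  have "(H ** S) ** transpose (H ** S) = H ** (S ** S) ** transpose H"
    using assms(1) by (simp add: matrix_transpose_mul matrix_mul_assoc)
  then have gram: "(H ** S) ** transpose (H ** S) = H ** S ** transpose H"
    using assms(2) by simp
  have "(H ** S ** transpose H) ** pinv (H ** S ** transpose H) ** (H ** S ** transpose H)
      = H ** S ** transpose H"
    using penrose_conditions_pinv penrose_conditions_def by blast
  then show ?thesis
    using gram_generalized_inverse_cancel[of "H ** S"] by (simp add: gram matrix_mul_assoc)
qed

lemma projector_vstack_pinv_complement:
  fixes T :: "real^'n^'n" and H :: "real^'n^'m"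
  assumes tT: "transpose T = T" and TT: "T ** T = T"
  defines "S \<equiv> mat 1 - T"
  shows "mat 1 - hstack T (transpose H) ** pinv (vstack T H ** hstack T (transpose H)) ** vstack T H
       = S - S ** transpose H ** pinv (H ** S ** transpose H) ** H ** S"
proof -
  define A where "A = vstack T H"
  define Y where "Y = pinv (H ** S ** transpose H)"
  define Q where "Q = S ** transpose H ** Y ** H ** S"
  have hstack_A: "hstack T (transpose H) = transpose A"
    using hstack_transpose[of T H] tT by (simp add: A_def)
  have tS: "transpose S = S" and SS: "S ** S = S" and TS: "T ** S = 0"
    using tT TT by (simp_all add: S_def transpose_diff matrix_diff_ldistrib matrix_diff_rdistrib)
  have "T ** (T + Q) = T"
    using TT TS by (simp add: Q_def matrix_add_ldistrib matrix_mul_assoc)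
  moreover have "H ** (T + Q) = H ** (T + S)"
    using projected_gram_pinv_cancel[OF tS SS, of H]
    by (simp add: Q_def Y_def matrix_add_ldistrib matrix_mul_assoc)
  ultimately have "A ** (T + Q) = A"
    by (simp add: A_def S_def vstack_mult)
  moreover have "T + Q = transpose A ** vstack (T - transpose H ** Y ** H ** S) (Y ** H ** S)"
    unfolding hstack_A[symmetric] hstack_vstack_mult
    using TT by (simp add: Q_def S_def matrix_diff_ldistrib matrix_diff_rdistrib matrix_mul_assoc)
  ultimately have "transpose A ** pinv (A ** transpose A) ** A = T + Q"
    by (rule row_space_projector_eq)
  then show ?thesis
    by (simp add: hstack_A A_def Q_def Y_def S_def)
qed

theorem proposition2p5:
  fixes \<theta> :: "real^'n" and H :: "real^'n^'m"
  assumes "\<forall>i. \<theta> $ i = 0 \<or> \<theta> $ i = 1"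
  shows "mat 1 - hstack (Diag \<theta>) (transpose H)
            ** pinv (vstack (Diag \<theta>) H ** hstack (Diag \<theta>) (transpose H))
            ** vstack (Diag \<theta>) H
         = (mat 1 - Diag \<theta>) - (mat 1 - Diag \<theta>) ** transpose H
            ** pinv (H ** (mat 1 - Diag \<theta>) ** transpose H) ** H ** (mat 1 - Diag \<theta>)"
proof (rule projector_vstack_pinv_complement)
  have "\<theta> * \<theta> = \<theta>" using assms by (auto simp: vec_eq_iff)
  then show "Diag \<theta> ** Diag \<theta> = Diag \<theta>" by (simp add: Diag_mult)
qed (rule transpose_Diag)

end
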